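(* Suppose $c_1\ge-1$, $c_2\ge-1$ and $c_3=\bar c_3(c_1,c_2)$. Then $U^*(x):=(1+\sqrt{1+c_1})(1-x)+(-1-\sqrt{1+c_2})(1+x)$ is the unique $C^1$ solution of $(1-x^2)U'+2xU+\frac12U^2=P_c(x)$ in $(-1,1)$. In particular $U^*(-1)=\tau_2(c_1)$ and $U^*(1)=\tau_1'(c_2)$.
   Context: $P_c(x):=c_1(1-x)+c_2(1+x)+c_3(1-x^2)$ for $c=(c_1,c_2,c_3)$. $\bar c_3(c_1,c_2):=-\frac12(\sqrt{1+c_1}+\sqrt{1+c_2})(\sqrt{1+c_1}+\sqrt{1+c_2}+2)$. $\tau_2(c_1):=2+2\sqrt{1+c_1}$, $\tau_1'(c_2):=-2-2\sqrt{1+c_2}$. *)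

theory Defs
  imports Complex_Main
begin

definition P :: "real \<Rightarrow> real \<Rightarrow> real \<Rightarrow> real \<Rightarrow> real" where
  "P c1 c2 c3 x = c1 * (1 - x) + c2 * (1 + x) + c3 * (1 - x^2)"

definition c3bar :: "real \<Rightarrow> real \<Rightarrow> real" where
  "c3bar c1 c2 = - (1/2) * (sqrt (1 + c1) + sqrt (1 + c2)) * (sqrt (1 + c1) + sqrt (1 + c2) + 2)"

definition tau2 :: "real \<Rightarrow> real" where
  "tau2 c1 = 2 + 2 * sqrt (1 + c1)"

definition tau1' :: "real \<Rightarrow> real" where
  "tau1' c2 = -2 - 2 * sqrt (1 + c2)"

definition Ustar :: "real \<Rightarrow> real \<Rightarrow> real \<Rightarrow> real" where
  "Ustar c1 c2 x = (1 + sqrt (1 + c1)) * (1 - x) + (-1 - sqrt (1 + c2)) * (1 + x)"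

definition C1_solution_on :: "real \<Rightarrow> real \<Rightarrow> real \<Rightarrow> (real \<Rightarrow> real) \<Rightarrow> bool" where
  "C1_solution_on c1 c2 c3 U \<longleftrightarrow>
     (\<exists>U'. (\<forall>x\<in>{-1<..<1}. (U has_real_derivative U' x) (at x))
          \<and> continuous_on {-1<..<1} U'
          \<and> (\<forall>x\<in>{-1<..<1}. (1 - x^2) * U' x + 2 * x * U x + (1/2) * (U x)^2 = P c1 c2 c3 x))"

end

theory Submission
  imports Defs
begin

text \<open>Write a = sqrt(1 + c1), b = sqrt(1 + c2). Subtracting the equation for U* from the one for
  a solution U gives (1 - x^2) V' = - V (V/2 + a(1 - x) - b(1 + x)) for V = U - U*. The Jacobi
  weight w = (1 - x)^b (1 + x)^a absorbs the linear term: W = V w satisfies the Riccati equation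
  W' = - g W^2 with g = 1/(2(1 - x^2) w) \<ge> K/(1 - x^2), K > 0, because w is bounded. If W never
  vanished, 1/W - K artanh would be nondecreasing, so 1/W would be negative near -1 and positive
  near 1, and W would vanish in between after all. Once W vanishes at one point it vanishes
  everywhere, by uniqueness for the linear equation W' = (- g W) W.\<close>

lemma linear_ode_zero_propagates:
  fixes V q :: "real \<Rightarrow> real"
  assumes "lo \<le> hi"
    and deriv: "\<And>x. lo \<le> x \<Longrightarrow> x \<le> hi \<Longrightarrow> (V has_real_derivative q x * V x) (at x)"
    and bound: "\<And>x. lo \<le> x \<Longrightarrow> x \<le> hi \<Longrightarrow> \<bar>q x\<bar> \<le> M"
  shows "V lo = 0 \<longleftrightarrow> V hi = 0"
proof -
  have weighted: "((\<lambda>x. (V x)\<^sup>2 * exp (2 * s * x)) has_real_derivative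
      2 * (q x + s) * ((V x)\<^sup>2 * exp (2 * s * x))) (at x)" if "lo \<le> x" "x \<le> hi" for s x
    by (auto intro!: derivative_eq_intros deriv[OF that] simp: algebra_simps power2_eq_square)
  have up: "(V lo)\<^sup>2 * exp (2 * M * lo) \<le> (V hi)\<^sup>2 * exp (2 * M * hi)"
  proof (rule DERIV_nonneg_imp_nondecreasing[OF \<open>lo \<le> hi\<close>])
    fix x assume x: "lo \<le> x" "x \<le> hi"
    have "0 \<le> q x + M" using bound[OF x] by linarith
    then show "\<exists>y. ((\<lambda>x. (V x)\<^sup>2 * exp (2 * M * x)) has_real_derivative y) (at x) \<and> 0 \<le> y"
      using weighted[OF x] by fastforce
  qed
  have down: "(V hi)\<^sup>2 * exp (2 * (- M) * hi) \<le> (V lo)\<^sup>2 * exp (2 * (- M) * lo)"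
  proof (rule DERIV_nonpos_imp_nonincreasing[OF \<open>lo \<le> hi\<close>])
    fix x assume x: "lo \<le> x" "x \<le> hi"
    have "q x + - M \<le> 0" using bound[OF x] by linarith
    then show "\<exists>y. ((\<lambda>x. (V x)\<^sup>2 * exp (2 * (- M) * x)) has_real_derivative y) (at x) \<and> y \<le> 0"
      using weighted[OF x] by (fastforce intro: mult_nonpos_nonneg)
  qed
  show ?thesis
  proof
    assume "V lo = 0"
    with down have "(V hi)\<^sup>2 * exp (2 * (- M) * hi) \<le> 0" by simp
    then show "V hi = 0" by (simp add: mult_le_0_iff)
  next
    assume "V hi = 0"
    with up have "(V lo)\<^sup>2 * exp (2 * M * lo) \<le> 0" by simp
    then show "V lo = 0" by (simp add: mult_le_0_iff)
  qed
qed

lemma linear_ode_vanishes_everywhere: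
  fixes V q :: "real \<Rightarrow> real"
  assumes deriv: "\<And>x. x \<in> {a<..<b} \<Longrightarrow> (V has_real_derivative q x * V x) (at x)"
    and cont: "continuous_on {a<..<b} q"
    and z: "z \<in> {a<..<b}" "V z = 0" and x: "x \<in> {a<..<b}"
  shows "V x = 0"
proof -
  define lo hi where "lo = min x z" and "hi = max x z"
  have inside: "y \<in> {a<..<b}" if "lo \<le> y" "y \<le> hi" for y
    using that x z by (auto simp: lo_def hi_def)
  have "isCont (\<lambda>y. \<bar>q y\<bar>) y" if "lo \<le> y" "y \<le> hi" for y
    using continuous_on_rabs[OF cont] inside[OF that] by (simp add: continuous_on_eq_continuous_at)
  then obtain M where "\<And>y. lo \<le> y \<Longrightarrow> y \<le> hi \<Longrightarrow> \<bar>q y\<bar> \<le> M"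
    using isCont_bounded[of lo hi "\<lambda>y. \<bar>q y\<bar>"] by (force simp: lo_def hi_def)
  then have "V lo = 0 \<longleftrightarrow> V hi = 0"
    using deriv inside by (intro linear_ode_zero_propagates) (auto simp: lo_def hi_def)
  with z show ?thesis by (auto simp: lo_def hi_def min_def max_def split: if_splits)
qed

lemma riccati_vanishes:
  fixes W g :: "real \<Rightarrow> real"
  assumes deriv: "\<And>x. x \<in> {-1<..<1} \<Longrightarrow> (W has_real_derivative - g x * (W x)\<^sup>2) (at x)"
    and cont: "continuous_on {-1<..<1} g"
    and "K > 0" and lower: "\<And>x. x \<in> {-1<..<1} \<Longrightarrow> K / (1 - x\<^sup>2) \<le> g x"
    and x: "x \<in> {-1<..<1}"
  shows "W x = 0"
proof -
  have W_cont: "isCont W y" if "y \<in> {-1<..<1}" for y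
    using deriv[OF that] by (rule DERIV_isCont)
  have "\<exists>z \<in> {-1<..<1}. W z = 0"
  proof (rule ccontr)
    assume "\<not> ?thesis"
    then have nz: "W y \<noteq> 0" if "y \<in> {-1<..<1}" for y
      using that by blast
    define F where "F y = inverse (W y) - K * artanh y" for y
    have F_mono: "F lo \<le> F hi" if "-1 < lo" "lo \<le> hi" "hi < 1" for lo hi
    proof (rule DERIV_nonneg_imp_nondecreasing[OF \<open>lo \<le> hi\<close>])
      fix y assume "lo \<le> y" "y \<le> hi"
      then have y: "y \<in> {-1<..<1}"
        using that by auto
      have "(F has_real_derivative g y - K / (1 - y\<^sup>2)) (at y)"
        unfolding F_def using deriv[OF y] nz[OF y] y
        by (auto intro!: derivative_eq_intros simp: power2_eq_square field_simps)
      then show "\<exists>d. (F has_real_derivative d) (at y) \<and> 0 \<le> d"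
        using lower[OF y] by auto
    qed
    define T where "T = (\<bar>inverse (W 0)\<bar> + 1) / K"
    have "T > 0"
      unfolding T_def using \<open>K > 0\<close> by (intro divide_pos_pos add_nonneg_pos) auto
    have KT: "K * T = \<bar>inverse (W 0)\<bar> + 1"
      using \<open>K > 0\<close> by (simp add: T_def)
    have "F 0 \<le> F (tanh T)"
      using tanh_real_bounds[of T] \<open>T > 0\<close> by (intro F_mono) auto
    then have "inverse (W 0) + K * T \<le> inverse (W (tanh T))"
      by (simp add: F_def artanh_tanh_real)
    then have "inverse (W (tanh T)) > 0"
      using KT abs_ge_minus_self[of "inverse (W 0)"] by linarith
    then have right: "W (tanh T) > 0" by simp
    have "F (tanh (- T)) \<le> F 0"
      using tanh_real_bounds[of "- T"] \<open>T > 0\<close> by (intro F_mono) auto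
    then have "inverse (W (tanh (- T))) \<le> inverse (W 0) - K * T"
      using tanh_real_bounds[of T] by (simp add: F_def artanh_tanh_real abs_less_iff)
    then have "inverse (W (tanh (- T))) < 0"
      using KT abs_ge_self[of "inverse (W 0)"] by linarith
    then have left: "W (tanh (- T)) < 0" by simp
    have "\<exists>z. tanh (- T) \<le> z \<and> z \<le> tanh T \<and> W z = 0"
      using left right tanh_real_bounds[of T] \<open>T > 0\<close> by (intro IVT) (auto intro!: W_cont)
    then show False
      using nz tanh_real_bounds[of T] by fastforce
  qed
  then obtain z where "z \<in> {-1<..<1}" "W z = 0" ..
  show ?thesis
  proof (rule linear_ode_vanishes_everywhere[where V = W and a = "-1" and b = 1 and q = "\<lambda>y. - g y * W y"])
    show "(W has_real_derivative - g y * W y * W y) (at y)" if "y \<in> {-1<..<1}" for y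
      using deriv[OF that] by (simp add: power2_eq_square mult.assoc)
    show "continuous_on {-1<..<1} (\<lambda>y. - g y * W y)"
      using W_cont by (intro continuous_intros cont continuous_at_imp_continuous_on) auto
  qed fact+
qed

definition jacobi_weight :: "real \<Rightarrow> real \<Rightarrow> real \<Rightarrow> real" where
  "jacobi_weight \<alpha> \<beta> x = (1 - x) powr \<alpha> * (1 + x) powr \<beta>"

lemma jacobi_weight_pos: "-1 < x \<Longrightarrow> x < 1 \<Longrightarrow> 0 < jacobi_weight \<alpha> \<beta> x"
  by (simp add: jacobi_weight_def)

lemma jacobi_weight_le:
  assumes "0 \<le> \<alpha>" "0 \<le> \<beta>" "-1 < x" "x < 1"
  shows "jacobi_weight \<alpha> \<beta> x \<le> 2 powr (\<alpha> + \<beta>)"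
proof -
  have "(1 - x) powr \<alpha> * (1 + x) powr \<beta> \<le> 2 powr \<alpha> * 2 powr \<beta>"
    using assms by (intro mult_mono powr_mono2) auto
  then show ?thesis
    by (simp add: jacobi_weight_def powr_add)
qed

lemma has_real_derivative_jacobi_weight:
  assumes "-1 < x" "x < 1"
  shows "(jacobi_weight \<alpha> \<beta> has_real_derivative
           jacobi_weight \<alpha> \<beta> x * (\<beta> / (1 + x) - \<alpha> / (1 - x))) (at x)"
  unfolding jacobi_weight_def [abs_def] using assms
  by (auto intro!: derivative_eq_intros simp: powr_diff field_simps)

lemma riccati_difference_weighted:
  fixes U u :: "real \<Rightarrow> real"
  assumes x: "-1 < x" "x < 1"
    and U: "(U has_real_derivative U') (at x)" and u: "(u has_real_derivative u') (at x)"
    and eq: "(1 - x\<^sup>2) * U' + 2 * x * U x + (1/2) * (U x)\<^sup>2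
           = (1 - x\<^sup>2) * u' + 2 * x * u x + (1/2) * (u x)\<^sup>2"
    and shift: "2 * x + u x = \<beta> * (1 - x) - \<alpha> * (1 + x)"
  shows "((\<lambda>y. (U y - u y) * jacobi_weight \<alpha> \<beta> y) has_real_derivative
           - (1 / (2 * (1 - x\<^sup>2) * jacobi_weight \<alpha> \<beta> x))
             * ((U x - u x) * jacobi_weight \<alpha> \<beta> x)\<^sup>2) (at x)"
proof -
  define V w r where "V = U x - u x" and "w = jacobi_weight \<alpha> \<beta> x"
    and "r = \<beta> / (1 + x) - \<alpha> / (1 - x)"
  have "0 < 1 - x\<^sup>2" "0 < w"
    using x jacobi_weight_pos[OF x] by (auto simp: w_def abs_square_less_1)
  have "(1 - x\<^sup>2) * (U' - u') + V * (V / 2 + 2 * x + u x)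
      = ((1 - x\<^sup>2) * U' + 2 * x * U x + (1/2) * (U x)\<^sup>2)
        - ((1 - x\<^sup>2) * u' + 2 * x * u x + (1/2) * (u x)\<^sup>2)"
    unfolding V_def by (simp add: field_simps power2_eq_square)
  then have diff: "(1 - x\<^sup>2) * (U' - u') = - V * (V / 2 + 2 * x + u x)"
    using eq by simp
  have "(1 - x\<^sup>2) * r = (1 + x) * (1 - x) * r"
    by (simp add: power2_eq_square algebra_simps)
  also have "\<dots> = (1 - x) * ((1 + x) * (\<beta> / (1 + x))) - (1 + x) * ((1 - x) * (\<alpha> / (1 - x)))"
    by (simp add: r_def algebra_simps)
  also have "\<dots> = \<beta> * (1 - x) - \<alpha> * (1 + x)"
    using x by simp
  finally have log_deriv: "(1 - x\<^sup>2) * r = \<beta> * (1 - x) - \<alpha> * (1 + x)" .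
  have "(U' - u') * w + w * r * V = ((1 - x\<^sup>2) * (U' - u') + V * ((1 - x\<^sup>2) * r)) * w / (1 - x\<^sup>2)"
    using \<open>0 < 1 - x\<^sup>2\<close> by (simp add: field_simps)
  also have "\<dots> = - (V * V / 2) * w / (1 - x\<^sup>2)"
    unfolding diff log_deriv shift[symmetric] by (simp add: algebra_simps)
  also have "\<dots> = - (1 / (2 * (1 - x\<^sup>2) * w)) * (V * w)\<^sup>2"
    using \<open>0 < w\<close> \<open>0 < 1 - x\<^sup>2\<close> by (simp add: field_simps power2_eq_square)
  finally have "(U' - u') * w + w * r * V = - (1 / (2 * (1 - x\<^sup>2) * w)) * (V * w)\<^sup>2" .
  with DERIV_mult[OF DERIV_diff[OF U u] has_real_derivative_jacobi_weight[OF x, of \<alpha> \<beta>]]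
  show ?thesis
    unfolding V_def w_def r_def by (rule DERIV_cong)
qed

lemma has_real_derivative_Ustar:
  "(Ustar c1 c2 has_real_derivative - (2 + sqrt (1 + c1) + sqrt (1 + c2))) (at x)"
  unfolding Ustar_def [abs_def] by (auto intro!: derivative_eq_intros)

lemma Ustar_riccati:
  assumes "c1 \<ge> -1" "c2 \<ge> -1" "c3 = c3bar c1 c2"
  shows "(1 - x\<^sup>2) * - (2 + sqrt (1 + c1) + sqrt (1 + c2)) + 2 * x * Ustar c1 c2 x
           + (1/2) * (Ustar c1 c2 x)\<^sup>2 = P c1 c2 c3 x"
proof -
  have "(sqrt (1 + c1))\<^sup>2 = 1 + c1" "(sqrt (1 + c2))\<^sup>2 = 1 + c2"
    using assms by simp_all
  then show ?thesis
    unfolding Ustar_def P_def \<open>c3 = c3bar c1 c2\<close> c3bar_def by algebra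
qed

lemma Ustar_C1_solution:
  assumes "c1 \<ge> -1" "c2 \<ge> -1" "c3 = c3bar c1 c2"
  shows "C1_solution_on c1 c2 c3 (Ustar c1 c2)"
  unfolding C1_solution_on_def
  using has_real_derivative_Ustar Ustar_riccati[OF assms]
  by (intro exI[of _ "\<lambda>_. - (2 + sqrt (1 + c1) + sqrt (1 + c2))"]) auto

lemma C1_solution_on_unique:
  assumes "c1 \<ge> -1" "c2 \<ge> -1" "c3 = c3bar c1 c2"
    and "C1_solution_on c1 c2 c3 U" and x: "x \<in> {-1<..<1}"
  shows "U x = Ustar c1 c2 x"
proof -
  define A B where "A = sqrt (1 + c1)" and "B = sqrt (1 + c2)"
  define w where "w = jacobi_weight B A"
  define g where "g y = 1 / (2 * (1 - y\<^sup>2) * w y)" for y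
  obtain U' where U': "\<And>y. y \<in> {-1<..<1} \<Longrightarrow> (U has_real_derivative U' y) (at y)"
    and U_riccati: "\<And>y. y \<in> {-1<..<1} \<Longrightarrow>
      (1 - y\<^sup>2) * U' y + 2 * y * U y + (1/2) * (U y)\<^sup>2 = P c1 c2 c3 y"
    using \<open>C1_solution_on c1 c2 c3 U\<close> unfolding C1_solution_on_def by blast
  have w_pos: "0 < w y" and one_minus_sq: "0 < 1 - y\<^sup>2" if "y \<in> {-1<..<1}" for y
    using that jacobi_weight_pos by (auto simp: w_def abs_square_less_1)
  have W_deriv: "((\<lambda>y. (U y - Ustar c1 c2 y) * w y) has_real_derivative
      - g y * ((U y - Ustar c1 c2 y) * w y)\<^sup>2) (at y)" if y: "y \<in> {-1<..<1}" for y
    unfolding g_def w_def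
  proof (rule riccati_difference_weighted[OF _ _ U'[OF y] has_real_derivative_Ustar])
    show "(1 - y\<^sup>2) * U' y + 2 * y * U y + (1/2) * (U y)\<^sup>2
        = (1 - y\<^sup>2) * - (2 + sqrt (1 + c1) + sqrt (1 + c2)) + 2 * y * Ustar c1 c2 y
          + (1/2) * (Ustar c1 c2 y)\<^sup>2"
      using U_riccati[OF y] Ustar_riccati[OF assms(1-3)] by simp
    show "2 * y + Ustar c1 c2 y = A * (1 - y) - B * (1 + y)"
      by (simp add: Ustar_def A_def B_def algebra_simps)
  qed (use y in auto)
  have "continuous_on {-1<..<1} w"
    unfolding w_def
    by (intro continuous_at_imp_continuous_on ballI DERIV_isCont[OF has_real_derivative_jacobi_weight]) auto
  moreover have "2 * (1 - y\<^sup>2) * w y \<noteq> 0" if "y \<in> {-1<..<1}" for y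
    using w_pos[OF that] one_minus_sq[OF that] by simp
  ultimately have g_cont: "continuous_on {-1<..<1} g"
    unfolding g_def by (intro continuous_intros) auto
  have g_lower: "1 / (2 * 2 powr (B + A)) / (1 - y\<^sup>2) \<le> g y" if y: "y \<in> {-1<..<1}" for y
  proof -
    have "w y \<le> 2 powr (B + A)"
      using y assms(1,2) unfolding w_def A_def B_def by (intro jacobi_weight_le) auto
    have "1 / (2 * 2 powr (B + A)) / (1 - y\<^sup>2) = 1 / (2 * (1 - y\<^sup>2) * 2 powr (B + A))"
      by (simp only: divide_divide_eq_left mult_ac)
    also have "\<dots> \<le> g y"
      unfolding g_def using w_pos[OF y] one_minus_sq[OF y] \<open>w y \<le> 2 powr (B + A)\<close>
      by (intro frac_le mult_left_mono) auto
    finally show ?thesis .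
  qed
  have "(U x - Ustar c1 c2 x) * w x = 0"
    by (rule riccati_vanishes[OF W_deriv g_cont _ g_lower x]) simp_all
  then show ?thesis
    using w_pos[OF x] by simp
qed

theorem lemma2p5:
  fixes c1 c2 c3 :: real
  assumes "c1 \<ge> -1" and "c2 \<ge> -1" and "c3 = c3bar c1 c2"
  shows "C1_solution_on c1 c2 c3 (Ustar c1 c2)
         \<and> (\<forall>U. C1_solution_on c1 c2 c3 U \<longrightarrow> (\<forall>x\<in>{-1<..<1}. U x = Ustar c1 c2 x))
         \<and> Ustar c1 c2 (-1) = tau2 c1
         \<and> Ustar c1 c2 1 = tau1' c2"
  using Ustar_C1_solution[OF assms] C1_solution_on_unique[OF assms]
  by (simp add: Ustar_def tau2_def tau1'_def)

end
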